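(* For every real number $\beta$, the distribution of $\beta H(n)\bmod 1$ converges to a probability measure on the circle $\mathbb{R}/\mathbb{Z}$.
   Context: $H$ is Hofstadter's $H$ sequence: $H(1)=1$ and $H(n)=n-H(H(H(n-1)))$ for $n>1$. "The distribution of $u_n\bmod 1$ converges to $\mu$" means that $\frac1N\sum_{n=1}^N\delta_{u_n\bmod 1}$ converges weakly to $\mu$ on $\mathbb{R}/\mathbb{Z}$. *)

theory Defs
  imports "HOL-Analysis.Analysis" "HOL-Probability.Probability"
begin

text \<open>Hofstadter's H sequence, H(1) = 1, H(n) = n - H(H(H(n-1))) for n > 1.
  The guards a < n, b < n are only there to make termination evident; they are
  always satisfied (1 <= H k <= k), see lemma hofH_rec.  The value at 0 is irrelevant.\<close>
function hofH :: "nat \<Rightarrow> nat" where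
  "hofH n = (if n \<le> 1 then 1 else
     (let a = hofH (n - 1);
          b = (if a < n then hofH a else 0);
          c = (if b < n then hofH b else 0)
      in n - c))"
  by auto
termination by (relation "Wellfounded.measure id") auto

declare hofH.simps [simp del]

lemma hofH_bounds: "n \<ge> 1 \<Longrightarrow> 1 \<le> hofH n \<and> hofH n \<le> n"
proof (induction n rule: less_induct)
  case (less n)
  show ?case
  proof (cases "n \<le> 1")
    case True then show ?thesis using less.prems by (simp add: hofH.simps[of n])
  next
    case False
    define a where "a = hofH (n - 1)"
    have a: "1 \<le> a \<and> a \<le> n - 1" using less.IH[of "n-1"] False a_def by auto
    define b where "b = hofH a"
    have an: "a < n" using a False by auto
    have b: "1 \<le> b \<and> b \<le> n - 1" using less.IH[of a, OF an] a b_def by auto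
    define c where "c = hofH b"
    have bn: "b < n" using b False by auto
    have c: "1 \<le> c \<and> c \<le> n - 1" using less.IH[of b, OF bn] b c_def by auto
    have "hofH n = n - c"
      apply (subst hofH.simps)
      using False an bn unfolding Let_def a_def b_def c_def by simp
    then show ?thesis using c False by auto
  qed
qed

lemma hofH_rec: "hofH 1 = 1" "n > 1 \<Longrightarrow> hofH n = n - hofH (hofH (hofH (n - 1)))"
proof -
  show "hofH 1 = 1" by (subst hofH.simps) simp
next
  assume n: "n > 1"
  have n1: "1 \<le> n - 1" using n by auto
  have a: "hofH (n-1) < n" using hofH_bounds[OF n1] n by auto
  have a1: "1 \<le> hofH (n-1)" using hofH_bounds[OF n1] by auto
  have b: "hofH (hofH (n-1)) < n" using hofH_bounds[OF a1] a by auto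
  show "hofH n = n - hofH (hofH (hofH (n - 1)))"
    apply (subst hofH.simps)
    using n a b by (simp add: Let_def)
qed

text \<open>A probability measure on the circle R/Z, represented as a Borel probability
  measure on the reals concentrated on the fundamental domain [0,1).\<close>
definition circle_prob_measure :: "real measure \<Rightarrow> bool" where
  "circle_prob_measure \<mu> \<longleftrightarrow> prob_space \<mu> \<and> sets \<mu> = sets borel \<and>
     emeasure \<mu> (UNIV - {0..<1}) = 0"

text \<open>The empirical distributions (1/N) sum_{n=1}^N delta_{u_n mod 1} converge weakly on R/Z
  to mu: continuous functions on R/Z are exactly the continuous 1-periodic functions on R.\<close>
definition distr_mod1_converges :: "(nat \<Rightarrow> real) \<Rightarrow> real measure \<Rightarrow> bool" where
  "distr_mod1_converges u \<mu> \<longleftrightarrow>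
     (\<forall>f :: real \<Rightarrow> real. continuous_on UNIV f \<longrightarrow> (\<forall>x. f (x + 1) = f x) \<longrightarrow>
        (\<lambda>N. (\<Sum>n = 1..N. f (u n)) / real N) \<longlonglongrightarrow> integral\<^sup>L \<mu> f)"

end

(* The proof rests on the self-similarity of H along Narayana's cow numbers N_k
   (N_{k+3} = N_{k+2} + N_k): H(N_{k+2} + r) = N_{k+1} + H(r) for r <= N_k.  Hence the exponential
   sums S(N) = sum_{n<N} e^{itH(n)} satisfy S(N_{k+3}) = S(N_{k+2}) + e^{itN_{k+1}} S(N_k), so the
   block means c_k = S(N_k)/N_k obey a recursion averaging c_{k+2} with a rotated copy of c_k.
   The norms |c_k| converge; if their limit is positive, the rotations e^{itN_k} tend to 1, and the
   Pisot property of x^3 - x^2 - 1 (one root outside the unit disc, two inside) makes them summably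
   close to 1, which forces c_k itself to converge.  Splitting N greedily into Narayana blocks gives
   convergence of the Cesaro means of e^{itH(n)} for every real t; by Stone-Weierstrass on the
   circle this extends to all continuous 1-periodic test functions, and the limit functional is
   realised by a weak limit point of the empirical distributions, reduced mod 1. *)

theory Submission
  imports Defs "HOL-Library.Periodic_Fun"
begin

section \<open>Hofstadter's H along Narayana blocks\<close>

text \<open>Setting \<open>H(0) = 0\<close> makes the block identity \<open>hofH0_narayana_block\<close> below hold for
  \<open>r = 0\<close> as well.\<close>
definition hofH0 :: "nat \<Rightarrow> nat" where
  "hofH0 n = (if n = 0 then 0 else hofH n)"

lemma hofH0_0 [simp]: "hofH0 0 = 0"
  and hofH0_1 [simp]: "hofH0 1 = 1" "hofH0 (Suc 0) = 1"
  using hofH_rec(1) by (simp_all add: hofH0_def)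

lemma hofH0_le: "hofH0 n \<le> n"
  using hofH_bounds[of n] by (simp add: hofH0_def)

lemma hofH0_rec:
  assumes "n \<ge> 1"
  shows "hofH0 n = n - hofH0 (hofH0 (hofH0 (n - 1)))"
proof (cases "n = 1")
  case False
  then have n: "n > 1" using assms by simp
  have a: "hofH (n - 1) \<ge> 1" using hofH_bounds[of "n - 1"] n by simp
  have b: "hofH (hofH (n - 1)) \<ge> 1" using hofH_bounds[OF a] by simp
  have c: "hofH (hofH (hofH (n - 1))) \<ge> 1" using hofH_bounds[OF b] by simp
  show ?thesis using n a b c hofH_rec(2)[OF n] by (simp add: hofH0_def)
qed simp

lemma hofH0_Suc: "hofH0 (Suc n) = hofH0 n \<or> hofH0 (Suc n) = Suc (hofH0 n)"
proof (induction n rule: less_induct)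
  case (less n)
  show ?case
  proof (cases n)
    case (Suc m)
    have step: "hofH0 y = hofH0 x \<or> hofH0 y = Suc (hofH0 x)" if "y = x \<or> y = Suc x" "x < n" for x y
      using that less.IH[of x] by auto
    define a where "a = hofH0 (hofH0 (hofH0 m))"
    have H: "hofH0 n = hofH0 m \<or> hofH0 n = Suc (hofH0 m)"
      using step[of n m] Suc by simp
    have HH: "hofH0 (hofH0 n) = hofH0 (hofH0 m) \<or> hofH0 (hofH0 n) = Suc (hofH0 (hofH0 m))"
      using step[OF H] hofH0_le[of m] Suc by linarith
    have HHH: "hofH0 (hofH0 (hofH0 n)) = a \<or> hofH0 (hofH0 (hofH0 n)) = Suc a"
      using step[OF HH] hofH0_le[of m] hofH0_le[of "hofH0 m"] Suc unfolding a_def by linarith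
    have "hofH0 (hofH0 (hofH0 n)) \<le> n" "a \<le> m"
      unfolding a_def using hofH0_le le_trans by metis+
    moreover have "hofH0 (Suc n) = Suc n - hofH0 (hofH0 (hofH0 n))" "hofH0 n = n - a"
      using hofH0_rec[of "Suc n"] hofH0_rec[of n] Suc unfolding a_def by simp_all
    ultimately show ?thesis using HHH Suc by linarith
  qed simp
qed

lemma mono_hofH0: "mono hofH0"
proof (rule mono_iff_le_Suc[THEN iffD2], rule allI)
  show "hofH0 n \<le> hofH0 (Suc n)" for n using hofH0_Suc[of n] by linarith
qed

fun narayana :: "nat \<Rightarrow> nat" where
  "narayana 0 = 1"
| "narayana (Suc 0) = 1"
| "narayana (Suc (Suc 0)) = 1"
| "narayana (Suc (Suc (Suc k))) = narayana (Suc (Suc k)) + narayana k"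

lemma narayana_add3: "narayana (k + 3) = narayana (k + 2) + narayana k"
  by (simp add: eval_nat_numeral)

lemma narayana_pos: "narayana k > 0"
  by (induction k rule: narayana.induct) simp_all

lemma mono_narayana: "mono narayana"
proof -
  have "narayana k \<le> narayana (Suc k)" for k
    by (induction k rule: narayana.induct) simp_all
  then show ?thesis by (simp add: mono_iff_le_Suc)
qed

lemma narayana_Suc_le: "narayana (Suc k) \<le> 2 * narayana k"
proof (induction k rule: narayana.induct)
  case (4 k)
  have "narayana (Suc k) \<le> narayana (Suc (Suc (Suc k)))" by (rule monoD[OF mono_narayana]) simp
  then show ?case by simp
qed simp_all

lemma hofH0_numeral: "hofH0 2 = 1" "hofH0 3 = 2" "hofH0 4 = 3"
proof -
  show 2: "hofH0 2 = 1" using hofH0_rec[of 2] by simp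
  show 3: "hofH0 3 = 2" using hofH0_rec[of 3] 2 by simp
  show "hofH0 4 = 3" using hofH0_rec[of 4] 2 3 by simp
qed

lemma narayana_numeral: "narayana 1 = 1" "narayana 2 = 1" "narayana 3 = 2" "narayana 4 = 3"
  by (simp_all add: eval_nat_numeral)

declare narayana.simps(4) [simp del]

lemma hofH0_narayana_block:
  assumes "k \<ge> 1" "r \<le> narayana k"
  shows "hofH0 (narayana (k + 2) + r) = narayana (k + 1) + hofH0 r"
  using assms
proof (induction k arbitrary: r rule: less_induct)
  case (less k)
  show ?case
  proof (cases "k \<ge> 3")
    case False
    with less.prems(1) have k: "k = 1 \<or> k = 2" by linarith
    with less.prems(2) have "r = 0 \<or> r = 1" using narayana_numeral by auto
    with k show ?thesis using hofH0_numeral narayana_numeral by (auto simp: eval_nat_numeral)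
  next
    case True
    define m where "m = k - 3"
    have k: "k = m + 3" using True unfolding m_def by simp
    have e: "m + 2 + 3 = m + 5" "m + 2 + 2 = m + 4" "m + 2 + 1 = m + 3"
      "m + 1 + 3 = m + 4" "m + 1 + 2 = m + 3" "m + 1 + 1 = m + 2" by simp_all
    have IH1: "hofH0 (narayana (m + 4) + s) = narayana (m + 3) + hofH0 s"
      if "s \<le> narayana (m + 2)" for s
      using less.IH[of "m + 2" s, unfolded e] that k by simp
    have IH2: "hofH0 (narayana (m + 3) + s) = narayana (m + 2) + hofH0 s"
      if "s \<le> narayana (m + 1)" for s
      using less.IH[of "m + 1" s, unfolded e] that k by simp
    have H3: "hofH0 (narayana (m + 3)) = narayana (m + 2)"
      using IH2[of 0] by simp
    have H2: "hofH0 (narayana (m + 2)) = narayana (m + 1)"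
    proof (cases "m = 0")
      case False
      then show ?thesis using less.IH[of m 0] k by simp
    qed (simp add: narayana_numeral)
    have N5: "narayana (m + 5) = narayana (m + 4) + narayana (m + 2)"
      and N4: "narayana (m + 4) = narayana (m + 3) + narayana (m + 1)"
      using narayana_add3[of "m + 2", unfolded e] narayana_add3[of "m + 1", unfolded e] .
    have block: "hofH0 (narayana (m + 5) + r) = narayana (m + 4) + hofH0 r"
      if "r \<le> narayana (m + 3)" for r
      using that
    proof (induction r)
      case 0
      have "hofH0 (narayana (m + 5)) = hofH0 (narayana (m + 4) + narayana (m + 2))"
        by (simp only: N5)
      also have "\<dots> = narayana (m + 3) + narayana (m + 1)"
        using IH1[of "narayana (m + 2)"] H2 by simp
      also have "\<dots> = narayana (m + 4)" by (simp only: N4)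
      finally show ?case by simp
    next
      case (Suc r)
      have r: "r \<le> narayana (m + 3)" using Suc.prems by simp
      have "hofH0 r \<le> narayana (m + 2)" using monoD[OF mono_hofH0 r] H3 by simp
      moreover from this have "hofH0 (hofH0 r) \<le> narayana (m + 1)"
        using monoD[OF mono_hofH0] H2 by metis
      moreover have "hofH0 (narayana (m + 5) + r) = narayana (m + 4) + hofH0 r"
        using Suc.IH r by simp
      ultimately have "hofH0 (hofH0 (hofH0 (narayana (m + 5) + r)))
          = narayana (m + 2) + hofH0 (hofH0 (hofH0 r))"
        using IH1 IH2 by simp
      moreover have "hofH0 (hofH0 (hofH0 r)) \<le> r"
        using hofH0_le[of r] hofH0_le[of "hofH0 r"] hofH0_le[of "hofH0 (hofH0 r)"] by linarith
      ultimately show ?case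
        using hofH0_rec[of "narayana (m + 5) + Suc r"] hofH0_rec[of "Suc r"] N5 by simp
    qed
    moreover have "k + 2 = m + 5" "k + 1 = m + 4" using k by simp_all
    ultimately show ?thesis using block[OF less.prems(2)[unfolded k]] by (simp only:)
  qed
qed

lemma hofH0_narayana_block_less:
  assumes "r < narayana k"
  shows "hofH0 (narayana (k + 2) + r) = narayana (k + 1) + hofH0 r"
proof (cases "k = 0")
  case True
  with assms show ?thesis by (simp add: narayana_numeral)
next
  case False
  with assms show ?thesis using hofH0_narayana_block[of k r] by simp
qed

lemma narayana_block_exists:
  assumes "N \<ge> 1"
  shows "\<exists>k. narayana (k + 2) \<le> N \<and> N < narayana (k + 3)"
  using assms
proof (induction N rule: dec_induct)
  case base
  show ?case by (rule exI[of _ 0]) (simp add: narayana_numeral)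
next
  case (step N)
  then obtain k where k: "narayana (k + 2) \<le> N" "N < narayana (k + 3)" by blast
  show ?case
  proof (cases "Suc N < narayana (k + 3)")
    case True
    with k show ?thesis by (intro exI[of _ k]) simp
  next
    case False
    have e: "k + 1 + 3 = k + 4" "k + 1 + 2 = k + 3" by simp_all
    have "narayana (k + 3) < narayana (k + 4)"
      using narayana_add3[of "k + 1", unfolded e] narayana_pos[of "k + 1"] by linarith
    with False k show ?thesis by (intro exI[of _ "k + 1"]) (simp only: e, linarith)
  qed
qed

lemma narayana_ratio_bounds:
  "1/2 \<le> real (narayana (k + 2)) / real (narayana (k + 3))"
  "real (narayana (k + 2)) / real (narayana (k + 3)) \<le> 7/8"
proof -
  have e: "Suc (k + 2) = k + 3" "Suc (k + 1) = k + 2" by simp_all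
  have "narayana (k + 3) \<le> 2 * narayana (k + 2)" "narayana (k + 2) \<le> 2 * narayana (k + 1)"
    "narayana (k + 1) \<le> 2 * narayana k"
    using narayana_Suc_le[of "k + 2"] narayana_Suc_le[of "k + 1"] narayana_Suc_le[of k]
    by (simp_all only: e) simp
  moreover have "narayana (k + 3) = narayana (k + 2) + narayana k" by (rule narayana_add3)
  ultimately have "narayana (k + 3) \<le> 2 * narayana (k + 2)"
    "8 * narayana (k + 2) \<le> 7 * narayana (k + 3)"
    by linarith+
  moreover have "real (narayana (k + 3)) > 0" using narayana_pos by simp
  ultimately show "1/2 \<le> real (narayana (k + 2)) / real (narayana (k + 3))"
    "real (narayana (k + 2)) / real (narayana (k + 3)) \<le> 7/8"
    by (simp_all add: field_simps)
qed

section \<open>A Pisot property of Narayana's recurrence\<close>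

lemma narayana_root_exists: "\<exists>\<theta>::real. \<theta>^3 = \<theta>^2 + 1 \<and> 1.4 \<le> \<theta> \<and> \<theta> \<le> 1.5"
proof -
  have "\<exists>x\<ge>1.4. x \<le> 1.5 \<and> (\<lambda>x::real. x^3 - x^2 - 1) x = 0"
    by (rule IVT) (auto intro!: continuous_intros simp: power3_eq_cube power2_eq_square)
  then obtain x :: real where "1.4 \<le> x" "x \<le> 1.5" "x^3 - x^2 - 1 = 0" by auto
  then show ?thesis by (intro exI[of _ x]) simp
qed

lemma eventually_zero_if_geometric_growth:
  fixes f :: "nat \<Rightarrow> real"
  assumes growth: "\<And>j. j \<ge> J \<Longrightarrow> f (Suc j) = \<theta> * f j" and "\<bar>\<theta>\<bar> \<ge> 1" and "f \<longlonglongrightarrow> 0"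
    and "j \<ge> J"
  shows "f j = 0"
proof -
  have "\<bar>f j\<bar> \<le> \<bar>f n\<bar>" if "n \<ge> j" for n
    using that
  proof (induction n rule: dec_induct)
    case (step n)
    have "\<bar>f n\<bar> \<le> \<bar>\<theta>\<bar> * \<bar>f n\<bar>" using \<open>\<bar>\<theta>\<bar> \<ge> 1\<close> by (simp add: mult_le_cancel_right1)
    with step growth[of n] \<open>j \<ge> J\<close> show ?case by (simp add: abs_mult)
  qed simp
  moreover have "(\<lambda>n. \<bar>f n\<bar>) \<longlonglongrightarrow> 0" using tendsto_rabs_zero[OF \<open>f \<longlonglongrightarrow> 0\<close>] .
  ultimately have "\<bar>f j\<bar> \<le> 0" by (intro LIMSEQ_le_const) auto
  then show ?thesis by simp
qed

lemma summable_abs_if_damped_recurrence: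
  fixes e :: "nat \<Rightarrow> real"
  assumes rec: "\<And>j. j \<ge> J \<Longrightarrow> e (j + 2) = - a * e (j + 1) - b * e j"
    and "a^2 < 4 * b" and "b < 1"
  shows "summable (\<lambda>j. \<bar>e j\<bar>)"
proof -
  define Q where "Q j = (e (j + 1))^2 + a * e (j + 1) * e j + b * (e j)^2" for j
  define \<kappa> where "\<kappa> = b - a^2 / 4"
  have \<kappa>: "\<kappa> > 0" and b: "b > 0"
    using assms(2,3) zero_le_power2[of a] unfolding \<kappa>_def by linarith+
  have Q_Suc: "Q (Suc j) = b * Q j" if "j \<ge> J" for j
  proof -
    have "Q (Suc j) = (e (j + 2))^2 + a * e (j + 2) * e (j + 1) + b * (e (j + 1))^2"
      unfolding Q_def by (simp add: eval_nat_numeral)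
    also have "\<dots> = b * Q j"
      unfolding rec[OF that] Q_def by (simp add: power2_eq_square algebra_simps)
    finally show ?thesis .
  qed
  have Q_pow: "Q (J + n) = b^n * Q J" for n
    by (induction n) (simp_all add: Q_Suc)
  have Q_lower: "\<kappa> * (e j)^2 \<le> Q j" for j
  proof -
    have "Q j = (e (j + 1) + a / 2 * e j)^2 + \<kappa> * (e j)^2"
      unfolding Q_def \<kappa>_def by (simp add: power2_eq_square algebra_simps)
    then show ?thesis by simp
  qed
  have bound: "\<bar>e (n + J)\<bar> \<le> sqrt (Q J / \<kappa>) * sqrt b ^ n" for n
  proof -
    have "(e (J + n))^2 \<le> b^n * (Q J / \<kappa>)"
      using Q_lower[of "J + n"] \<kappa> unfolding Q_pow by (simp add: field_simps)
    then have "sqrt ((e (J + n))^2) \<le> sqrt (b^n * (Q J / \<kappa>))" by (rule real_sqrt_le_mono)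
    also have "\<dots> = sqrt (Q J / \<kappa>) * sqrt b ^ n"
      unfolding real_sqrt_mult real_sqrt_power by (rule mult.commute)
    finally show ?thesis by (simp add: add.commute)
  qed
  have "summable (\<lambda>n. sqrt (Q J / \<kappa>) * sqrt b ^ n)"
    using b \<open>b < 1\<close> by (intro summable_mult summable_geometric) simp
  then have "summable (\<lambda>n. \<bar>e (n + J)\<bar>)"
    by (rule summable_comparison_test'[where N = 0]) (use bound in simp)
  then show ?thesis by (subst summable_iff_shift[symmetric, of _ J])
qed

text \<open>Write \<open>x\<^sup>3 - x\<^sup>2 - 1 = (x - \<theta>) (x\<^sup>2 + a x + b)\<close> with \<open>a = \<theta> - 1\<close> and \<open>b = \<theta>\<^sup>2 - \<theta> = 1/\<theta>\<close>.
  The component of \<open>e\<close> along the root \<open>\<theta> > 1\<close> grows geometrically, so it vanishes because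
  \<open>e \<longlonglongrightarrow> 0\<close>; what is left is the damped recurrence of the two conjugate roots of modulus
  \<open>sqrt b < 1\<close>.\<close>
lemma summable_abs_if_narayana_recurrence:
  fixes e :: "nat \<Rightarrow> real"
  assumes rec: "\<And>j. j \<ge> J \<Longrightarrow> e (j + 3) = e (j + 2) + e j" and lim: "e \<longlonglongrightarrow> 0"
  shows "summable (\<lambda>j. \<bar>e j\<bar>)"
proof -
  obtain \<theta> :: real where \<theta>: "\<theta>^3 = \<theta>^2 + 1" "1.4 \<le> \<theta>" "\<theta> \<le> 1.5"
    using narayana_root_exists by blast
  define a where "a = \<theta> - 1"
  define b where "b = \<theta>^2 - \<theta>"
  have \<theta>b: "\<theta> * b = 1"
    using \<theta>(1) unfolding b_def by (simp add: power2_eq_square power3_eq_cube algebra_simps)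
  have \<theta>a: "\<theta> * a = b" unfolding a_def b_def by (simp add: power2_eq_square algebra_simps)
  have a: "0.4 \<le> a" "a \<le> 0.5" using \<theta> unfolding a_def by auto
  have "1.4 * 0.4 \<le> \<theta> * a" "\<theta> * a \<le> 1.5 * 0.5"
    using \<theta> a by (intro mult_mono; simp)+
  then have b: "0.56 \<le> b" "b \<le> 0.75"
    unfolding a_def b_def by (simp_all add: power2_eq_square algebra_simps)
  define f where "f j = e (j + 2) + a * e (j + 1) + b * e j" for j
  have growth: "f (Suc j) = \<theta> * f j" if "j \<ge> J" for j
  proof -
    have "f (Suc j) = (1 + a) * e (j + 2) + b * e (j + 1) + e j"
      unfolding f_def using rec[OF that] by (simp add: eval_nat_numeral algebra_simps)
    also have "\<dots> = \<theta> * e (j + 2) + (\<theta> * a) * e (j + 1) + (\<theta> * b) * e j"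
      unfolding \<theta>a \<theta>b by (simp add: a_def)
    also have "\<dots> = \<theta> * f j"
      unfolding f_def by (simp add: algebra_simps)
    finally show ?thesis .
  qed
  have "(\<lambda>j. e (j + k)) \<longlonglongrightarrow> 0" for k
    using LIMSEQ_ignore_initial_segment[OF lim] .
  then have "f \<longlonglongrightarrow> 0 + a * 0 + b * 0"
    unfolding f_def by (intro tendsto_intros lim)
  then have f_zero: "f j = 0" if "j \<ge> J" for j
    using eventually_zero_if_geometric_growth[of J f \<theta> j] growth that \<theta>(2) by simp
  have "e (j + 2) = - a * e (j + 1) - b * e j" if "j \<ge> J" for j
    using f_zero[OF that] unfolding f_def by linarith
  moreover have "a^2 < 4 * b"
    using power_mono[OF a(1), of 2] power_mono[of a "0.5" 2] a b by (simp add: power2_eq_square)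
  ultimately show ?thesis using b by (intro summable_abs_if_damped_recurrence[of J]) auto
qed

lemma cis_eq_1_imp: "cis x = 1 \<Longrightarrow> \<exists>k::int. x = 2 * pi * of_int k"
  using exp_eq_1[of "\<i> * complex_of_real x"] by (auto simp: cis_conv_exp)

lemma norm_cis_minus_1_le: "norm (cis x - 1) \<le> \<bar>x\<bar>"
  using dist_exp_i_1[of x] abs_sin_x_le_abs_x[of "x / 2"] by (simp add: cis_conv_exp)

lemma narayana_pisot:
  fixes t :: real
  assumes lim: "(\<lambda>j. cis (t * real (narayana j))) \<longlonglongrightarrow> 1"
  shows "summable (\<lambda>j. norm (cis (t * real (narayana j)) - 1))"
proof -
  define e where "e j = Arg (cis (t * real (narayana j)))" for j
  have cis_e: "cis (e j) = cis (t * real (narayana j))" for j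
    unfolding e_def using cis_Arg[of "cis (t * real (narayana j))"] by simp
  have "isCont Arg 1"
    by (rule continuous_at_Arg) (simp add: complex_nonpos_Reals_iff)
  then have "e \<longlonglongrightarrow> Arg 1"
    unfolding e_def by (rule isCont_tendsto_compose[OF _ lim])
  then have e_lim: "e \<longlonglongrightarrow> 0" by simp
  have "eventually (\<lambda>j. \<bar>e j\<bar> < 2 * pi / 3) sequentially"
    by (rule order_tendstoD(2)[OF tendsto_rabs_zero[OF e_lim]]) simp
  then obtain J where J: "\<And>j. j \<ge> J \<Longrightarrow> \<bar>e j\<bar> < 2 * pi / 3"
    by (auto simp: eventually_sequentially)
  \<comment> \<open>The angles satisfy the Narayana recurrence modulo \<open>2 pi\<close>, hence exactly once they are small.\<close>
  have rec: "e (j + 3) = e (j + 2) + e j" if "j \<ge> J" for j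
  proof -
    have "real (narayana (j + 3)) = real (narayana (j + 2)) + real (narayana j)"
      using narayana_add3[of j] by simp
    then have "cis (e (j + 3) - e (j + 2) - e j) = 1"
      by (simp add: cis_divide[symmetric] cis_mult cis_e distrib_left)
    then obtain k :: int where k: "e (j + 3) - e (j + 2) - e j = 2 * pi * of_int k"
      using cis_eq_1_imp by blast
    have "\<bar>e (j + 3) - e (j + 2) - e j\<bar> < 2 * pi * 1"
      using J[of j] J[of "j + 2"] J[of "j + 3"] that by linarith
    then have "k = 0" unfolding k by (simp add: abs_mult)
    with k show ?thesis by simp
  qed
  have "summable (\<lambda>j. \<bar>e j\<bar>)"
    by (rule summable_abs_if_narayana_recurrence[OF rec e_lim])
  then show ?thesis
    by (rule summable_comparison_test') (use norm_cis_minus_1_le in \<open>simp add: cis_e[symmetric]\<close>)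
qed

section \<open>Lagged averaging recursions\<close>

lemma convergent_if_quasi_decreasing:
  fixes a \<delta> :: "nat \<Rightarrow> real"
  assumes step: "\<And>j. a (Suc j) \<le> a j + \<delta> j" and "summable \<delta>" and \<delta>: "\<And>j. \<delta> j \<ge> 0"
    and lower: "\<And>j. B \<le> a j"
  shows "convergent a"
proof -
  define T where "T j = (\<Sum>i. \<delta> (i + j))" for j
  have summable_tail: "summable (\<lambda>i. \<delta> (i + j))" for j
    using \<open>summable \<delta>\<close> by (subst summable_iff_shift)
  have T_Suc: "T j = \<delta> j + T (Suc j)" for j
    using suminf_split_head[OF summable_tail[of j]] by (simp add: T_def)
  have T_nonneg: "T j \<ge> 0" for j
    unfolding T_def using summable_tail \<delta> by (intro suminf_nonneg) auto
  have "decseq (\<lambda>j. a j + T j)"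
    by (rule decseq_SucI) (use step T_Suc in \<open>smt (verit)\<close>)
  then obtain A where A: "(\<lambda>j. a j + T j) \<longlonglongrightarrow> A"
    by (rule decseq_convergent[where B = B]) (use lower T_nonneg in \<open>smt (verit)\<close>)
  have "T \<longlonglongrightarrow> 0"
    unfolding T_def by (rule suminf_exist_split2[OF \<open>summable \<delta>\<close>])
  from tendsto_diff[OF A this] show ?thesis by (auto simp: convergent_def)
qed

lemma convex_comb_le:
  fixes p a b M :: real
  assumes "a \<le> M" "b \<le> M" "1/2 \<le> p" "p \<le> 1"
  shows "2 * (p * a + (1 - p) * b) \<le> M + a"
proof -
  have "M + a - 2 * (p * a + (1 - p) * b) = (2 * p - 1) * (M - a) + 2 * ((1 - p) * (M - b))"
    by (simp add: algebra_simps)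
  moreover have "0 \<le> (2 * p - 1) * (M - a)" "0 \<le> (1 - p) * (M - b)"
    using assms by simp_all
  ultimately show ?thesis by linarith
qed

definition window_max :: "(nat \<Rightarrow> real) \<Rightarrow> nat \<Rightarrow> real" where
  "window_max y j = max (y j) (max (y (j + 1)) (y (j + 2)))"

lemma window_max_le_iff: "window_max y j \<le> c \<longleftrightarrow> y j \<le> c \<and> y (j + 1) \<le> c \<and> y (j + 2) \<le> c"
  by (simp add: window_max_def)

lemma le_window_max:
  "y j \<le> window_max y j" "y (j + 1) \<le> window_max y j" "y (j + 2) \<le> window_max y j"
  by (simp_all add: window_max_def)

context
  fixes y \<epsilon> p :: "nat \<Rightarrow> real"
  assumes rec: "\<And>j. y (j + 3) \<le> p j * y (j + 2) + (1 - p j) * y j + \<epsilon> j"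
    and p: "\<And>j. 1/2 \<le> p j" "\<And>j. p j \<le> 1"
begin

lemma lagged_subaverage_step:
  assumes "y (j + 2) \<le> M" "y j \<le> M"
  shows "2 * y (j + 3) \<le> M + y (j + 2) + 2 * \<bar>\<epsilon> j\<bar>"
  using rec[of j] convex_comb_le[OF assms p(1)[of j] p(2)[of j]] abs_ge_self[of "\<epsilon> j"]
  by (simp add: algebra_simps)

lemma window_max_Suc_le: "window_max y (Suc j) \<le> window_max y j + \<bar>\<epsilon> j\<bar>"
proof -
  have "y (j + 1) \<le> window_max y j + \<bar>\<epsilon> j\<bar>" "y (j + 2) \<le> window_max y j + \<bar>\<epsilon> j\<bar>"
    "y (j + 3) \<le> window_max y j + \<bar>\<epsilon> j\<bar>"
    using lagged_subaverage_step[OF le_window_max(3)[of y j] le_window_max(1)[of y j]]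
      le_window_max[of y j] abs_ge_zero[of "\<epsilon> j"] by linarith+
  then show ?thesis
    unfolding window_max_le_iff by (simp add: eval_nat_numeral)
qed

lemma window_max_add3_le:
  "4 * window_max y (j + 3)
     \<le> 3 * window_max y j + y (j + 2) + 4 * \<bar>\<epsilon> j\<bar> + 4 * \<bar>\<epsilon> (j + 1)\<bar> + 4 * \<bar>\<epsilon> (j + 2)\<bar>"
proof -
  define M where "M = window_max y j"
  have M: "y j \<le> M" "y (j + 1) \<le> M" "y (j + 2) \<le> M"
    unfolding M_def by (rule le_window_max)+
  have e: "j + 1 + 3 = j + 4" "j + 1 + 2 = j + 3" "j + 2 + 3 = j + 5" "j + 2 + 2 = j + 4"
    by simp_all
  have y3: "2 * y (j + 3) \<le> M + y (j + 2) + 2 * \<bar>\<epsilon> j\<bar>"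
    using lagged_subaverage_step[OF M(3,1)] .
  have y4: "4 * y (j + 4) \<le> 3 * M + y (j + 2) + 4 * \<bar>\<epsilon> j\<bar> + 4 * \<bar>\<epsilon> (j + 1)\<bar>"
    using lagged_subaverage_step[of "j + 1" "M + \<bar>\<epsilon> j\<bar>", unfolded e] y3 M by linarith
  define L where "L = (3 * M + y (j + 2)) / 4 + \<bar>\<epsilon> j\<bar> + \<bar>\<epsilon> (j + 1)\<bar>"
  have L: "4 * L = 3 * M + y (j + 2) + 4 * \<bar>\<epsilon> j\<bar> + 4 * \<bar>\<epsilon> (j + 1)\<bar>"
    unfolding L_def by simp
  have "2 * y (j + 5) \<le> L + y (j + 4) + 2 * \<bar>\<epsilon> (j + 2)\<bar>"
    by (rule lagged_subaverage_step[of "j + 2" L, unfolded e]) (use y4 M L in linarith)+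
  then have "y (j + 3) \<le> L + \<bar>\<epsilon> (j + 2)\<bar> \<and> y (j + 4) \<le> L + \<bar>\<epsilon> (j + 2)\<bar>
      \<and> y (j + 5) \<le> L + \<bar>\<epsilon> (j + 2)\<bar>"
    using y3 y4 L M abs_ge_zero[of "\<epsilon> (j + 1)"] abs_ge_zero[of "\<epsilon> (j + 2)"] by linarith
  then have "window_max y (j + 3) \<le> L + \<bar>\<epsilon> (j + 2)\<bar>"
    unfolding window_max_le_iff by (simp add: eval_nat_numeral)
  then show ?thesis using L unfolding M_def by linarith
qed

lemma lagged_subaverage_convergent:
  assumes "summable (\<lambda>j. \<bar>\<epsilon> j\<bar>)" and lower: "\<And>j. B \<le> y j"
  shows "convergent y"
proof -
  define W where "W = window_max y"
  define E where "E j = \<bar>\<epsilon> j\<bar> + \<bar>\<epsilon> (j + 1)\<bar> + \<bar>\<epsilon> (j + 2)\<bar>" for j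
  have "B \<le> W j" for j
    using lower[of j] le_window_max(1)[of y j] unfolding W_def by linarith
  then have "convergent W"
    unfolding W_def by (intro convergent_if_quasi_decreasing[OF window_max_Suc_le assms(1)]) auto
  then obtain A where A: "W \<longlonglongrightarrow> A" by (auto simp: convergent_def)
  have tail: "(\<lambda>j. \<bar>\<epsilon> (j + k)\<bar>) \<longlonglongrightarrow> 0" for k
    using LIMSEQ_ignore_initial_segment[OF summable_LIMSEQ_zero[OF assms(1)]] .
  have "E \<longlonglongrightarrow> 0 + 0 + 0"
    unfolding E_def by (intro tendsto_add tail tail[of 0, simplified])
  with A have "(\<lambda>j. 4 * W (j + 3) - 3 * W j - 4 * E j) \<longlonglongrightarrow> 4 * A - 3 * A - 4 * (0 + 0 + 0)"
    by (intro tendsto_intros LIMSEQ_ignore_initial_segment)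
  then have lower_lim: "(\<lambda>j. 4 * W (j + 3) - 3 * W j - 4 * E j) \<longlonglongrightarrow> A" by simp
  have "(\<lambda>j. y (j + 2)) \<longlonglongrightarrow> A"
  proof (rule tendsto_sandwich[OF _ _ lower_lim A])
    show "eventually (\<lambda>j. 4 * W (j + 3) - 3 * W j - 4 * E j \<le> y (j + 2)) sequentially"
    proof (intro always_eventually allI)
      fix j
      show "4 * W (j + 3) - 3 * W j - 4 * E j \<le> y (j + 2)"
        using window_max_add3_le[of j] unfolding W_def E_def by (simp add: algebra_simps)
    qed
    show "eventually (\<lambda>j. y (j + 2) \<le> W j) sequentially"
      unfolding W_def by (intro always_eventually allI le_window_max)
  qed
  then show ?thesis unfolding convergent_def by (blast intro: LIMSEQ_offset)
qed

end

section \<open>Averaging recursions with rotations\<close>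

lemma norm_convex_comb_sq:
  fixes a b :: complex and p :: real
  shows "(norm (of_real p * a + of_real (1 - p) * b))^2
    = p * (norm a)^2 + (1 - p) * (norm b)^2 - p * (1 - p) * (norm (a - b))^2"
  unfolding cmod_power2 by (simp add: power2_eq_square algebra_simps)

lemma complex_convergent_iff_Re_Im:
  "convergent c \<longleftrightarrow> convergent (\<lambda>j. Re (c j)) \<and> convergent (\<lambda>j. Im (c j))"
proof
  assume "convergent (\<lambda>j. Re (c j)) \<and> convergent (\<lambda>j. Im (c j))"
  then obtain a b where "(\<lambda>j. Re (c j)) \<longlonglongrightarrow> a" "(\<lambda>j. Im (c j)) \<longlonglongrightarrow> b"
    by (auto simp: convergent_def)
  from tendsto_Complex[OF this] show "convergent c" by (auto simp: convergent_def)
qed (auto simp: convergent_def intro: tendsto_Re tendsto_Im)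

text \<open>The bound \<open>p \<le> 7/8\<close> keeps \<open>p (1 - p) \<ge> 1/16\<close> in \<open>norm_defect_sq_le\<close>; for the block
  means of \<open>H\<close>, \<open>p\<close> is a ratio of Narayana numbers (\<open>narayana_ratio_bounds\<close>).\<close>
locale rotation_recurrence =
  fixes c w :: "nat \<Rightarrow> complex" and p :: "nat \<Rightarrow> real"
  assumes rec: "\<And>j. c (j + 3) = of_real (p j) * c (j + 2) + of_real (1 - p j) * (w j * c j)"
    and p_lower: "\<And>j. 1/2 \<le> p j" and p_upper: "\<And>j. p j \<le> 7/8"
    and norm_w: "\<And>j. norm (w j) = 1"
begin

lemma norm_convergent: "convergent (\<lambda>j. norm (c j))"
proof (rule lagged_subaverage_convergent[where \<epsilon> = "\<lambda>_. 0" and p = p and B = 0])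
  show "norm (c (j + 3)) \<le> p j * norm (c (j + 2)) + (1 - p j) * norm (c j) + 0" for j
    using norm_triangle_ineq[of "of_real (p j) * c (j + 2)" "of_real (1 - p j) * (w j * c j)"]
      p_lower[of j] p_upper[of j] norm_w[of j]
    by (simp add: rec norm_mult del: of_real_diff)
  show "1/2 \<le> p j" "p j \<le> 1" for j using p_lower[of j] p_upper[of j] by simp_all
qed simp_all

lemma norm_defect_sq_le:
  "(norm (c (j + 2) - w j * c j))^2
    \<le> 16 * (\<bar>(norm (c (j + 2)))^2 - R^2\<bar> + \<bar>(norm (c j))^2 - R^2\<bar> + \<bar>(norm (c (j + 3)))^2 - R^2\<bar>)"
proof -
  define d where "d = c (j + 2) - w j * c j"
  have p: "0 \<le> p j" "p j \<le> 1" "1/16 \<le> p j * (1 - p j)"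
    using p_lower[of j] p_upper[of j] mult_mono[of "1/2" "p j" "1/8" "1 - p j"] by auto
  have "p j * (1 - p j) * (norm d)^2
      = p j * ((norm (c (j + 2)))^2 - R^2) + (1 - p j) * ((norm (c j))^2 - R^2)
        - ((norm (c (j + 3)))^2 - R^2)"
    using norm_convex_comb_sq[of "p j" "c (j + 2)" "w j * c j"] norm_w[of j]
    by (simp add: rec d_def norm_mult algebra_simps)
  also have "\<dots> \<le> \<bar>(norm (c (j + 2)))^2 - R^2\<bar> + \<bar>(norm (c j))^2 - R^2\<bar>
      + \<bar>(norm (c (j + 3)))^2 - R^2\<bar>"
  proof -
    have weight: "q * x \<le> \<bar>x\<bar>" if "0 \<le> q" "q \<le> 1" for q x :: real
      using mult_left_mono[OF abs_ge_self[of x] that(1)]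
        mult_right_mono[OF that(2) abs_ge_zero[of x]] by linarith
    show ?thesis
      using weight[of "p j" "(norm (c (j + 2)))^2 - R^2"]
        weight[of "1 - p j" "(norm (c j))^2 - R^2"] p
        abs_ge_minus_self[of "(norm (c (j + 3)))^2 - R^2"] by linarith
  qed
  finally show ?thesis
    using mult_right_mono[OF p(3), of "(norm d)^2"] unfolding d_def by simp
qed

text \<open>Once the norms converge, the parallelogram identity for the convex combination in the
  recursion forces the two combined points together.\<close>
lemma defect_tendsto_zero:
  assumes R: "(\<lambda>j. norm (c j)) \<longlonglongrightarrow> R"
  shows "(\<lambda>j. c (j + 2) - w j * c j) \<longlonglongrightarrow> 0"
proof -
  define g where "g j = \<bar>(norm (c (j + 2)))^2 - R^2\<bar> + \<bar>(norm (c j))^2 - R^2\<bar>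
    + \<bar>(norm (c (j + 3)))^2 - R^2\<bar>" for j
  have sq: "(\<lambda>j. \<bar>(norm (c (j + k)))^2 - R^2\<bar>) \<longlonglongrightarrow> 0" for k
  proof -
    have "(\<lambda>j. (norm (c (j + k)))^2 - R^2) \<longlonglongrightarrow> R^2 - R^2"
      by (intro tendsto_intros LIMSEQ_ignore_initial_segment R)
    then show ?thesis using tendsto_rabs_zero by fastforce
  qed
  have "g \<longlonglongrightarrow> 0 + 0 + 0"
    unfolding g_def by (intro tendsto_add sq sq[of 0, simplified])
  then have "(\<lambda>j. 16 * g j) \<longlonglongrightarrow> 0"
    using tendsto_mult_left[of g 0 sequentially 16] by simp
  then have sqrt_lim: "(\<lambda>j. sqrt (16 * g j)) \<longlonglongrightarrow> 0"
    using tendsto_real_sqrt by fastforce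
  show ?thesis
  proof (rule Lim_null_comparison[OF always_eventually sqrt_lim], rule allI)
    show "norm (c (j + 2) - w j * c j) \<le> sqrt (16 * g j)" for j
      unfolding g_def by (rule real_le_rsqrt[OF norm_defect_sq_le])
  qed
qed

lemma successive_difference_tendsto_zero:
  assumes R: "(\<lambda>j. norm (c j)) \<longlonglongrightarrow> R"
  shows "(\<lambda>j. c (Suc j) - c j) \<longlonglongrightarrow> 0"
proof -
  have diff_le: "norm (c (j + 3) - c (j + 2)) \<le> norm (c (j + 2) - w j * c j)" for j
  proof -
    have "c (j + 3) - c (j + 2) = - of_real (1 - p j) * (c (j + 2) - w j * c j)"
      unfolding rec by (simp add: algebra_simps)
    then have "norm (c (j + 3) - c (j + 2)) = \<bar>1 - p j\<bar> * norm (c (j + 2) - w j * c j)"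
      by (simp only: norm_mult norm_minus_cancel norm_of_real)
    moreover have "\<bar>1 - p j\<bar> \<le> 1" using p_lower[of j] p_upper[of j] by simp
    ultimately show ?thesis using mult_right_mono[of "\<bar>1 - p j\<bar>" 1] by simp
  qed
  have "(\<lambda>j. c (j + 3) - c (j + 2)) \<longlonglongrightarrow> 0"
    using tendsto_norm_zero[OF defect_tendsto_zero[OF R]]
    by (rule Lim_null_comparison[OF always_eventually, rotated]) (use diff_le in blast)
  then have "(\<lambda>j. c (Suc (j + 2)) - c (j + 2)) \<longlonglongrightarrow> 0"
    by (simp add: numeral_3_eq_3)
  then show ?thesis by (rule LIMSEQ_offset)
qed

lemma w_tendsto_one:
  assumes R: "(\<lambda>j. norm (c j)) \<longlonglongrightarrow> R" and "R > 0"
  shows "w \<longlonglongrightarrow> 1"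
proof -
  define d where "d j = c (j + 2) - w j * c j" for j
  have d: "d \<longlonglongrightarrow> 0" unfolding d_def by (rule defect_tendsto_zero[OF R])
  note step = successive_difference_tendsto_zero[OF R]
  have "(\<lambda>j. (c (Suc (Suc j)) - c (Suc j)) + (c (Suc j) - c j) - d j) \<longlonglongrightarrow> 0 + 0 - 0"
    by (intro tendsto_diff tendsto_add step LIMSEQ_Suc[OF step] d)
  moreover have "(c (Suc (Suc j)) - c (Suc j)) + (c (Suc j) - c j) - d j = (w j - 1) * c j" for j
    unfolding d_def by (simp add: numeral_2_eq_2 algebra_simps)
  ultimately have "(\<lambda>j. (w j - 1) * c j) \<longlonglongrightarrow> 0" by simp
  then have "(\<lambda>j. norm ((w j - 1) * c j) / norm (c j)) \<longlonglongrightarrow> 0 / R"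
    using \<open>R > 0\<close> by (intro tendsto_divide tendsto_norm_zero R) simp_all
  then have lim: "(\<lambda>j. norm ((w j - 1) * c j) / norm (c j)) \<longlonglongrightarrow> 0" by simp
  have "eventually (\<lambda>j. norm ((w j - 1) * c j) / norm (c j) = norm (w j - 1)) sequentially"
    using order_tendstoD(1)[OF R \<open>R > 0\<close>] by eventually_elim (simp add: norm_mult)
  from Lim_transform_eventually[OF lim this] have "(\<lambda>j. norm (w j - 1)) \<longlonglongrightarrow> 0" .
  then show ?thesis by (simp add: tendsto_norm_zero_iff LIM_zero_iff)
qed

text \<open>Once the rotations are summably close to the identity, the real and imaginary parts obey
  the real recursion up to a summable error.\<close>
lemma convergent_if_summable_rotation:
  assumes bounded: "\<And>j. norm (c j) \<le> B" and summable: "summable (\<lambda>j. norm (w j - 1))"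
  shows "convergent c"
proof -
  define \<epsilon> where "\<epsilon> j = of_real (1 - p j) * ((w j - 1) * c j)" for j
  have rec': "c (j + 3) = of_real (p j) * c (j + 2) + of_real (1 - p j) * c j + \<epsilon> j" for j
    unfolding rec \<epsilon>_def by (simp add: algebra_simps)
  have \<epsilon>_bound: "norm (\<epsilon> j) \<le> B * norm (w j - 1)" for j
  proof -
    have "norm (\<epsilon> j) = (1 - p j) * (norm (w j - 1) * norm (c j))"
      using p_upper[of j] unfolding \<epsilon>_def by (simp add: norm_mult del: of_real_diff)
    also have "\<dots> \<le> 1 * (norm (w j - 1) * B)"
      using p_lower[of j] p_upper[of j] bounded[of j] by (intro mult_mono) auto
    finally show ?thesis by (simp add: mult.commute)
  qed
  have \<epsilon>_summable: "summable (\<lambda>j. norm (\<epsilon> j))"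
    by (rule summable_comparison_test'[OF summable_mult[OF summable, of B], where N = 0])
       (simp add: \<epsilon>_bound)
  have part_convergent: "convergent (\<lambda>j. f (c j))"
    if f_le: "\<And>z. \<bar>f z\<bar> \<le> norm z"
      and f_rec: "\<And>j. f (c (j + 3)) = p j * f (c (j + 2)) + (1 - p j) * f (c j) + f (\<epsilon> j)" for f
  proof (rule lagged_subaverage_convergent[where p = p and B = "- B"])
    show "f (c (j + 3)) \<le> p j * f (c (j + 2)) + (1 - p j) * f (c j) + f (\<epsilon> j)" for j
      by (simp add: f_rec)
    show "1/2 \<le> p j" "p j \<le> 1" for j using p_lower[of j] p_upper[of j] by simp_all
    show "summable (\<lambda>j. \<bar>f (\<epsilon> j)\<bar>)"
      by (rule summable_comparison_test'[OF \<epsilon>_summable, where N = 0]) (simp add: f_le)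
    show "- B \<le> f (c j)" for j using f_le[of "c j"] bounded[of j] by linarith
  qed
  have "convergent (\<lambda>j. Re (c j))"
    by (rule part_convergent[OF abs_Re_le_cmod]) (simp add: rec')
  moreover have "convergent (\<lambda>j. Im (c j))"
    by (rule part_convergent[OF abs_Im_le_cmod]) (simp add: rec')
  ultimately show ?thesis by (simp add: complex_convergent_iff_Re_Im)
qed

theorem convergent_if_pisot:
  assumes bounded: "\<And>j. norm (c j) \<le> B"
    and pisot: "w \<longlonglongrightarrow> 1 \<Longrightarrow> summable (\<lambda>j. norm (w j - 1))"
  shows "convergent c"
proof -
  obtain R where R: "(\<lambda>j. norm (c j)) \<longlonglongrightarrow> R"
    using norm_convergent by (auto simp: convergent_def)
  have "R \<ge> 0" by (rule LIMSEQ_le_const[OF R]) simp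
  show ?thesis
  proof (cases "R = 0")
    case True
    with R have "c \<longlonglongrightarrow> 0" by (simp add: tendsto_norm_zero_iff)
    then show ?thesis by (auto simp: convergent_def)
  next
    case False
    with \<open>R \<ge> 0\<close> have "w \<longlonglongrightarrow> 1" using w_tendsto_one[OF R] by simp
    with bounded pisot show ?thesis by (intro convergent_if_summable_rotation) auto
  qed
qed

lemma rotation_limit:
  assumes "c \<longlonglongrightarrow> L"
  shows "(\<lambda>j. (w j - 1) * L) \<longlonglongrightarrow> 0"
proof -
  have d: "(\<lambda>j. c (j + 2) - w j * c j) \<longlonglongrightarrow> 0"
    by (rule defect_tendsto_zero[OF tendsto_norm[OF assms]])
  have "(\<lambda>j. L - c j) \<longlonglongrightarrow> 0"
    using tendsto_diff[OF tendsto_const assms, of L] by simp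
  from tendsto_norm_zero[OF this] have a: "(\<lambda>j. w j * (L - c j)) \<longlonglongrightarrow> 0"
    by (rule Lim_null_comparison[OF always_eventually, rotated]) (simp add: norm_mult norm_w)
  have b: "(\<lambda>j. c (j + 2) - L) \<longlonglongrightarrow> 0"
    using LIMSEQ_ignore_initial_segment[OF assms, of 2] by (simp add: LIM_zero)
  have "(\<lambda>j. w j * (L - c j) + (c (j + 2) - L) - (c (j + 2) - w j * c j)) \<longlonglongrightarrow> 0 + 0 - 0"
    by (intro tendsto_diff tendsto_add a b d)
  then show ?thesis by (simp add: algebra_simps)
qed

end

section \<open>Exponential sums of H\<close>

lemma tendsto_mean_if_linear_deviation:
  fixes a :: "nat \<Rightarrow> 'a::real_normed_field"
  assumes deviation: "\<And>\<epsilon>. \<epsilon> > 0 \<Longrightarrow> \<exists>C. \<forall>N. norm (a N - of_nat N * L) \<le> \<epsilon> * real N + C"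
  shows "(\<lambda>N. a N / of_nat N) \<longlonglongrightarrow> L"
proof (rule tendstoI)
  fix e :: real
  assume "e > 0"
  then obtain C where C: "\<And>N. norm (a N - of_nat N * L) \<le> e / 2 * real N + C"
    using deviation[of "e / 2"] by auto
  obtain N0 :: nat where N0: "2 * \<bar>C\<bar> / e < real N0"
    using reals_Archimedean2 by blast
  have "dist (a N / of_nat N) L < e" if "N \<ge> Suc N0" for N
  proof -
    have "2 * \<bar>C\<bar> < e * real N0" using N0 \<open>e > 0\<close> by (simp add: divide_less_eq mult.commute)
    moreover have "e * real N0 < e * real N" using that \<open>e > 0\<close> by simp
    ultimately have N: "real N > 0" "2 * \<bar>C\<bar> < e * real N"
      using that by simp_all
    have "a N / of_nat N - L = (a N - of_nat N * L) / of_nat N"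
      using N by (simp add: field_simps)
    then have "dist (a N / of_nat N) L = norm (a N - of_nat N * L) / real N"
      by (simp add: dist_norm norm_divide)
    also have "\<dots> \<le> (e / 2 * real N + C) / real N"
      using C N by (intro divide_right_mono) auto
    also have "\<dots> < e"
      using N by (simp add: field_simps)
    finally show ?thesis .
  qed
  then show "eventually (\<lambda>N. dist (a N / of_nat N) L < e) sequentially"
    by (rule eventually_sequentiallyI)
qed

definition hofH_expsum :: "real \<Rightarrow> nat \<Rightarrow> complex" where
  "hofH_expsum t N = (\<Sum>n<N. cis (t * real (hofH0 n)))"

definition hofH_block_mean :: "real \<Rightarrow> nat \<Rightarrow> complex" where
  "hofH_block_mean t k = hofH_expsum t (narayana k) / of_nat (narayana k)"

lemma norm_hofH_expsum_le: "norm (hofH_expsum t N) \<le> real N"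
  unfolding hofH_expsum_def using norm_sum[of "\<lambda>n. cis (t * real (hofH0 n))" "{..<N}"] by simp

lemma hofH_expsum_add:
  "hofH_expsum t (m + s) = hofH_expsum t m + (\<Sum>r<s. cis (t * real (hofH0 (m + r))))"
  by (induction s) (simp_all add: hofH_expsum_def)

lemma hofH_expsum_block:
  assumes "s \<le> narayana k"
  shows "hofH_expsum t (narayana (k + 2) + s)
    = hofH_expsum t (narayana (k + 2)) + cis (t * real (narayana (k + 1))) * hofH_expsum t s"
proof -
  have "(\<Sum>r<s. cis (t * real (hofH0 (narayana (k + 2) + r))))
      = (\<Sum>r<s. cis (t * real (narayana (k + 1))) * cis (t * real (hofH0 r)))"
  proof (rule sum.cong[OF refl])
    fix r
    assume "r \<in> {..<s}"
    with assms have "hofH0 (narayana (k + 2) + r) = narayana (k + 1) + hofH0 r"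
      by (intro hofH0_narayana_block_less) simp
    then show "cis (t * real (hofH0 (narayana (k + 2) + r)))
        = cis (t * real (narayana (k + 1))) * cis (t * real (hofH0 r))"
      by (simp add: cis_mult distrib_left)
  qed
  then show ?thesis
    unfolding hofH_expsum_add by (simp add: hofH_expsum_def sum_distrib_left)
qed

lemma hofH_expsum_narayana_add3:
  "hofH_expsum t (narayana (k + 3))
    = hofH_expsum t (narayana (k + 2))
      + cis (t * real (narayana (k + 1))) * hofH_expsum t (narayana k)"
  using hofH_expsum_block[of "narayana k" k t] narayana_add3[of k] by simp

lemma norm_hofH_block_mean_le: "norm (hofH_block_mean t k) \<le> 1"
  using norm_hofH_expsum_le[of t "narayana k"] narayana_pos[of k]
  by (simp add: hofH_block_mean_def norm_divide)

lemma hofH_block_mean_rotation_recurrence: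
  "rotation_recurrence (hofH_block_mean t) (\<lambda>k. cis (t * real (narayana (k + 1))))
     (\<lambda>k. real (narayana (k + 2)) / real (narayana (k + 3)))"
proof
  fix k
  have n: "real (narayana (k + 3)) = real (narayana (k + 2)) + real (narayana k)"
    "real (narayana k) > 0" "real (narayana (k + 2)) > 0"
    using narayana_add3[of k] narayana_pos[of k] narayana_pos[of "k + 2"] by simp_all
  then have one: "1 - real (narayana (k + 2)) / real (narayana (k + 3))
      = real (narayana k) / real (narayana (k + 3))"
    by (simp add: field_simps)
  have nz: "(of_nat (narayana k) :: complex) \<noteq> 0" "(of_nat (narayana (k + 2)) :: complex) \<noteq> 0"
    "(of_nat (narayana (k + 3)) :: complex) \<noteq> 0"
    using narayana_pos[of k] narayana_pos[of "k + 2"] narayana_pos[of "k + 3"] by simp_all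
  show "hofH_block_mean t (k + 3)
      = of_real (real (narayana (k + 2)) / real (narayana (k + 3))) * hofH_block_mean t (k + 2)
      + of_real (1 - real (narayana (k + 2)) / real (narayana (k + 3)))
        * (cis (t * real (narayana (k + 1))) * hofH_block_mean t k)"
    unfolding one hofH_block_mean_def hofH_expsum_narayana_add3 using nz by (simp add: field_simps)
qed (use narayana_ratio_bounds in simp_all)

lemma hofH_block_mean_convergent: "convergent (hofH_block_mean t)"
proof -
  interpret rotation_recurrence "hofH_block_mean t" "\<lambda>k. cis (t * real (narayana (k + 1)))"
    "\<lambda>k. real (narayana (k + 2)) / real (narayana (k + 3))"
    by (rule hofH_block_mean_rotation_recurrence)
  show ?thesis
  proof (rule convergent_if_pisot)
    assume "(\<lambda>k. cis (t * real (narayana (k + 1)))) \<longlonglongrightarrow> 1"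
    then have "summable (\<lambda>k. norm (cis (t * real (narayana k)) - 1))"
      using LIMSEQ_offset[of "\<lambda>k. cis (t * real (narayana k))" 1] narayana_pisot by blast
    then show "summable (\<lambda>k. norm (cis (t * real (narayana (k + 1))) - 1))"
      by (subst summable_iff_shift)
  qed (rule norm_hofH_block_mean_le)
qed

lemma hofH_expsum_block_deviation:
  assumes "s \<le> narayana k"
  shows "norm (hofH_expsum t (narayana (k + 2) + s) - of_nat (narayana (k + 2) + s) * L)
    \<le> norm (hofH_block_mean t (k + 2) - L) * real (narayana (k + 2))
      + norm (hofH_expsum t s - of_nat s * L)
      + norm ((cis (t * real (narayana (k + 1))) - 1) * L) * real s"
proof -
  define w where "w = cis (t * real (narayana (k + 1)))"
  have "hofH_expsum t (narayana (k + 2) + s) - of_nat (narayana (k + 2) + s) * L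
      = (hofH_block_mean t (k + 2) - L) * of_nat (narayana (k + 2))
        + w * (hofH_expsum t s - of_nat s * L) + (w - 1) * L * of_nat s"
    using narayana_pos[of "k + 2"]
    unfolding hofH_expsum_block[OF assms] hofH_block_mean_def w_def by (simp add: algebra_simps)
  also have "norm \<dots> \<le> norm ((hofH_block_mean t (k + 2) - L) * of_nat (narayana (k + 2)))
      + norm (w * (hofH_expsum t s - of_nat s * L)) + norm ((w - 1) * L * of_nat s)"
    by (rule order_trans[OF norm_triangle_ineq add_mono[OF norm_triangle_ineq order_refl]])
  also have "\<dots> = norm (hofH_block_mean t (k + 2) - L) * real (narayana (k + 2))
      + norm (hofH_expsum t s - of_nat s * L) + norm ((w - 1) * L) * real s"
    unfolding w_def by (simp add: norm_mult)
  finally show ?thesis unfolding w_def .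
qed

text \<open>Decompose \<open>N = narayana (k + 2) + s\<close> with \<open>s \<le> narayana k\<close>: the first block is close to its
  limiting mean, and the remainder is a rotated copy of an initial segment, handled by induction.\<close>
lemma hofH_expsum_deviation:
  assumes L: "hofH_block_mean t \<longlonglongrightarrow> L" and "\<delta> > 0"
  shows "\<exists>C. \<forall>N. norm (hofH_expsum t N - of_nat N * L) \<le> 3 * \<delta> * real N + C"
proof -
  interpret rotation_recurrence "hofH_block_mean t" "\<lambda>k. cis (t * real (narayana (k + 1)))"
    "\<lambda>k. real (narayana (k + 2)) / real (narayana (k + 3))"
    by (rule hofH_block_mean_rotation_recurrence)
  have "norm L \<le> 1"
    by (rule LIMSEQ_le_const2[OF tendsto_norm[OF L]]) (simp add: norm_hofH_block_mean_le)
  have "eventually (\<lambda>k. dist (hofH_block_mean t k) L < \<delta>) sequentially"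
    by (rule tendstoD[OF L \<open>\<delta> > 0\<close>])
  moreover have
    "eventually (\<lambda>k. dist ((cis (t * real (narayana (k + 1))) - 1) * L) 0 < \<delta>) sequentially"
    by (rule tendstoD[OF rotation_limit[OF L] \<open>\<delta> > 0\<close>])
  ultimately have "eventually (\<lambda>k. dist (hofH_block_mean t k) L < \<delta>
      \<and> dist ((cis (t * real (narayana (k + 1))) - 1) * L) 0 < \<delta>) sequentially"
    by (rule eventually_conj)
  then obtain J where J: "\<And>k. k \<ge> J \<Longrightarrow> norm (hofH_block_mean t k - L) < \<delta>
      \<and> norm ((cis (t * real (narayana (k + 1))) - 1) * L) < \<delta>"
    unfolding eventually_sequentially dist_norm diff_zero by blast
  define C where "C = 2 * real (narayana (J + 2))"
  have "norm (hofH_expsum t N - of_nat N * L) \<le> 3 * \<delta> * real N + C" for N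
  proof (induction N rule: less_induct)
    case (less N)
    show ?case
    proof (cases "N < narayana (J + 2)")
      case True
      have "norm (hofH_expsum t N - of_nat N * L) \<le> real N + real N * norm L"
        using norm_triangle_ineq4[of "hofH_expsum t N" "of_nat N * L"] norm_hofH_expsum_le[of t N]
        by (simp add: norm_mult)
      also have "\<dots> \<le> C"
        using True \<open>norm L \<le> 1\<close> mult_left_mono[OF \<open>norm L \<le> 1\<close>, of "real N"] unfolding C_def by simp
      moreover have "0 \<le> 3 * \<delta> * real N" using \<open>\<delta> > 0\<close> by simp
      ultimately show ?thesis by linarith
    next
      case False
      then obtain k where k: "narayana (k + 2) \<le> N" "N < narayana (k + 3)"
        using narayana_block_exists[of N] narayana_pos[of "J + 2"] by auto
      have "k \<ge> J"
      proof (rule ccontr)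
        assume "\<not> k \<ge> J"
        then have "narayana (k + 3) \<le> narayana (J + 2)" by (intro monoD[OF mono_narayana]) simp
        with False k show False by simp
      qed
      define s where "s = N - narayana (k + 2)"
      have N: "N = narayana (k + 2) + s" and s: "s \<le> narayana k" "s \<le> narayana (k + 2)" "s < N"
        using k narayana_add3[of k] narayana_pos[of "k + 2"] monoD[OF mono_narayana, of k "k + 2"]
        unfolding s_def by simp_all
      have "norm (hofH_expsum t N - of_nat N * L)
          \<le> norm (hofH_block_mean t (k + 2) - L) * real (narayana (k + 2))
            + norm (hofH_expsum t s - of_nat s * L)
            + norm ((cis (t * real (narayana (k + 1))) - 1) * L) * real s"
        unfolding N by (rule hofH_expsum_block_deviation[OF s(1)])
      also have "\<dots> \<le> \<delta> * real (narayana (k + 2)) + (3 * \<delta> * real s + C) + \<delta> * real s"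
      proof -
        have "norm (hofH_block_mean t (k + 2) - L) \<le> \<delta>"
          "norm ((cis (t * real (narayana (k + 1))) - 1) * L) \<le> \<delta>"
          using J[of "k + 2"] J[OF \<open>k \<ge> J\<close>] \<open>k \<ge> J\<close> by simp_all
        then show ?thesis
          using less.IH[OF s(3)] by (intro add_mono mult_right_mono) simp_all
      qed
      also have "\<dots> \<le> 3 * \<delta> * real N + C"
        using s(2) \<open>\<delta> > 0\<close> mult_left_mono[of "real s" "real (narayana (k + 2))" \<delta>]
        unfolding N by (simp add: algebra_simps)
      finally show ?thesis .
    qed
  qed
  then show ?thesis by blast
qed

lemma hofH_expsum_mean_tendsto:
  assumes "hofH_block_mean t \<longlonglongrightarrow> L"
  shows "(\<lambda>N. hofH_expsum t N / of_nat N) \<longlonglongrightarrow> L"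
proof (rule tendsto_mean_if_linear_deviation)
  fix \<epsilon> :: real
  assume "\<epsilon> > 0"
  with hofH_expsum_deviation[OF assms, of "\<epsilon> / 3"]
  show "\<exists>C. \<forall>N. norm (hofH_expsum t N - of_nat N * L) \<le> \<epsilon> * real N + C"
    by simp
qed

definition cesaro_mean :: "(nat \<Rightarrow> 'a::real_normed_field) \<Rightarrow> nat \<Rightarrow> 'a" where
  "cesaro_mean a N = (\<Sum>n = 1..N. a n) / of_nat N"

lemma sum_cis_hofH: "(\<Sum>n = 1..N. cis (t * real (hofH n))) = hofH_expsum t (Suc N) - 1"
  by (induction N) (simp_all add: hofH_expsum_def hofH0_def)

theorem cesaro_mean_cis_hofH_convergent: "convergent (cesaro_mean (\<lambda>n. cis (t * real (hofH n))))"
proof -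
  define A where
    "A N = hofH_expsum t (Suc N) / of_nat (Suc N) * (of_nat (Suc N) / of_nat N) - 1 / of_nat N"
    for N
  obtain L where "hofH_block_mean t \<longlonglongrightarrow> L"
    using hofH_block_mean_convergent by (auto simp: convergent_def)
  then have "A \<longlonglongrightarrow> L * 1 - 0"
    unfolding A_def
    by (intro tendsto_intros LIMSEQ_Suc[OF hofH_expsum_mean_tendsto] LIMSEQ_Suc_n_over_n
        lim_inverse_n')
  then have lim: "A \<longlonglongrightarrow> L" by simp
  have "eventually (\<lambda>N. A N = cesaro_mean (\<lambda>n. cis (t * real (hofH n))) N) sequentially"
  proof (rule eventually_sequentiallyI)
    fix N :: nat
    assume "N \<ge> 1"
    then show "A N = cesaro_mean (\<lambda>n. cis (t * real (hofH n))) N"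
      unfolding A_def cesaro_mean_def sum_cis_hofH by (simp add: field_simps del: of_nat_Suc)
  qed
  from Lim_transform_eventually[OF lim this]
  have "cesaro_mean (\<lambda>n. cis (t * real (hofH n))) \<longlonglongrightarrow> L" .
  then show ?thesis by (auto simp: convergent_def)
qed

section \<open>From exponentials to continuous periodic functions\<close>

inductive trig_poly :: "(real \<Rightarrow> complex) \<Rightarrow> bool" where
  monomial: "trig_poly (\<lambda>x. a * cis (2 * pi * of_int k * x))"
| add: "trig_poly f \<Longrightarrow> trig_poly g \<Longrightarrow> trig_poly (\<lambda>x. f x + g x)"

lemma trig_poly_const: "trig_poly (\<lambda>x. a)"
  using trig_poly.monomial[of a 0] by simp

lemma trig_poly_mult:
  assumes "trig_poly f" "trig_poly g"
  shows "trig_poly (\<lambda>x. f x * g x)"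
  using assms
proof (induction arbitrary: g rule: trig_poly.induct)
  case (monomial a k)
  then show ?case
  proof (induction rule: trig_poly.induct)
    case (monomial b l)
    have "(\<lambda>x. a * cis (2 * pi * of_int k * x) * (b * cis (2 * pi * of_int l * x)))
        = (\<lambda>x. a * b * cis (2 * pi * of_int (k + l) * x))"
      by (simp add: cis_mult algebra_simps)
    then show ?case by (simp only: trig_poly.monomial)
  qed (simp add: distrib_left trig_poly.add)
qed (simp add: distrib_right trig_poly.add)

lemma cis_2pi_times_int: "cis (2 * pi * of_int k) = 1"
  by (rule complex_eqI) (simp_all add: cos_int_2pin sin_int_2pin)

lemma of_real_cos_cis: "complex_of_real (cos \<theta>) = (cis \<theta> + cis (- \<theta>)) / 2"
  by (rule complex_eqI) simp_all

lemma of_real_sin_cis: "complex_of_real (sin \<theta>) = (cis \<theta> - cis (- \<theta>)) / (2 * \<i>)"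
proof -
  have "cis \<theta> - cis (- \<theta>) = 2 * \<i> * complex_of_real (sin \<theta>)" by (rule complex_eqI) simp_all
  then show ?thesis by simp
qed

lemma trig_poly_real_polynomial:
  assumes "real_polynomial_function g"
  shows "trig_poly (\<lambda>x. complex_of_real (g (cis (2 * pi * x))))"
  using assms
proof (induction rule: real_polynomial_function.induct)
  case (linear f)
  have f: "f z = Re z * f 1 + Im z * f \<i>" for z
  proof -
    have "z = Re z *\<^sub>R 1 + Im z *\<^sub>R \<i>" by (simp add: complex_eq_iff)
    then have "f z = f (Re z *\<^sub>R 1 + Im z *\<^sub>R \<i>)" by (rule arg_cong)
    also have "\<dots> = Re z * f 1 + Im z * f \<i>"
      using bounded_linear.linear[OF linear]
      by (simp add: real_vector.linear_add real_vector.linear_scale)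
    finally show ?thesis .
  qed
  define a where "a = complex_of_real (f 1)"
  define b where "b = complex_of_real (f \<i>)"
  have "complex_of_real (f (cis (2 * pi * x)))
      = (a / 2 * cis (2 * pi * of_int 1 * x) + a / 2 * cis (2 * pi * of_int (-1) * x))
        + (b / (2 * \<i>) * cis (2 * pi * of_int 1 * x)
          + - b / (2 * \<i>) * cis (2 * pi * of_int (-1) * x))" for x
  proof -
    have "complex_of_real (f (cis (2 * pi * x)))
        = of_real (cos (2 * pi * x)) * a + of_real (sin (2 * pi * x)) * b"
      using f[of "cis (2 * pi * x)"] unfolding a_def b_def by simp
    also have "\<dots> = (a / 2 * cis (2 * pi * of_int 1 * x) + a / 2 * cis (2 * pi * of_int (-1) * x))
        + (b / (2 * \<i>) * cis (2 * pi * of_int 1 * x)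
          + - b / (2 * \<i>) * cis (2 * pi * of_int (-1) * x))"
      unfolding of_real_cos_cis of_real_sin_cis by (simp add: field_simps)
    finally show ?thesis .
  qed
  then show ?case by (simp only: trig_poly.add trig_poly.monomial)
qed (simp_all add: trig_poly_const trig_poly.add trig_poly_mult)

lemma cesaro_mean_add: "cesaro_mean (\<lambda>n. a n + b n) N = cesaro_mean a N + cesaro_mean b N"
  by (simp add: cesaro_mean_def sum.distrib add_divide_distrib)

lemma cesaro_mean_cmult: "cesaro_mean (\<lambda>n. c * a n) N = c * cesaro_mean a N"
  by (simp add: cesaro_mean_def sum_distrib_left)

lemma trig_poly_cesaro_mean_convergent:
  assumes exp: "\<And>k::int. convergent (cesaro_mean (\<lambda>n. cis (2 * pi * of_int k * u n)))"
    and "trig_poly f"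
  shows "convergent (cesaro_mean (\<lambda>n. f (u n)))"
  using \<open>trig_poly f\<close>
proof induction
  case (monomial a k)
  then show ?case
    using exp[of k] by (simp add: cesaro_mean_cmult convergent_mult convergent_const)
next
  case (add f g)
  then show ?case by (simp add: cesaro_mean_add convergent_add)
qed

lemma cesaro_mean_convergent_if_uniform_approx:
  fixes f :: "real \<Rightarrow> real"
  assumes approx: "\<And>e. e > 0 \<Longrightarrow> \<exists>h. (\<forall>x. \<bar>f x - h x\<bar> \<le> e) \<and> convergent (cesaro_mean (\<lambda>n. h (u n)))"
  shows "convergent (cesaro_mean (\<lambda>n. f (u n)))"
  unfolding Cauchy_convergent_iff[symmetric]
proof (rule CauchyI)
  fix e :: real
  assume "e > 0"
  then obtain h where h: "\<And>x. \<bar>f x - h x\<bar> \<le> e / 3"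
    and conv: "convergent (cesaro_mean (\<lambda>n. h (u n)))"
    using approx[of "e / 3"] by auto
  have close: "\<bar>cesaro_mean (\<lambda>n. f (u n)) N - cesaro_mean (\<lambda>n. h (u n)) N\<bar> \<le> e / 3" for N
  proof (cases "N = 0")
    case False
    have "\<bar>(\<Sum>n = 1..N. f (u n)) - (\<Sum>n = 1..N. h (u n))\<bar> \<le> (\<Sum>n = 1..N. \<bar>f (u n) - h (u n)\<bar>)"
      unfolding sum_subtractf[symmetric] by (rule sum_abs)
    also have "\<dots> \<le> real N * (e / 3)"
      using sum_mono[of "{1..N}" "\<lambda>n. \<bar>f (u n) - h (u n)\<bar>" "\<lambda>_. e / 3"] h by simp
    finally show ?thesis
      using False
      by (simp add: cesaro_mean_def diff_divide_distrib[symmetric] abs_divide field_simps)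
  qed (use \<open>e > 0\<close> in \<open>simp add: cesaro_mean_def\<close>)
  obtain M where M: "\<And>m n. m \<ge> M \<Longrightarrow> n \<ge> M
      \<Longrightarrow> norm (cesaro_mean (\<lambda>n. h (u n)) m - cesaro_mean (\<lambda>n. h (u n)) n) < e / 3"
    using CauchyD[OF conv[unfolded Cauchy_convergent_iff[symmetric]], of "e / 3"] \<open>e > 0\<close> by auto
  show "\<exists>M. \<forall>m\<ge>M. \<forall>n\<ge>M. norm (cesaro_mean (\<lambda>n. f (u n)) m - cesaro_mean (\<lambda>n. f (u n)) n) < e"
  proof (intro exI allI impI)
    fix m n
    assume "m \<ge> M" "n \<ge> M"
    have "norm (cesaro_mean (\<lambda>n. f (u n)) m - cesaro_mean (\<lambda>n. f (u n)) n)
        \<le> \<bar>cesaro_mean (\<lambda>n. f (u n)) m - cesaro_mean (\<lambda>n. h (u n)) m\<bar>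
          + \<bar>cesaro_mean (\<lambda>n. h (u n)) m - cesaro_mean (\<lambda>n. h (u n)) n\<bar>
          + \<bar>cesaro_mean (\<lambda>n. h (u n)) n - cesaro_mean (\<lambda>n. f (u n)) n\<bar>"
      by simp
    also have "\<dots> < e / 3 + e / 3 + e / 3"
      using close[of m] close[of n] M[OF \<open>m \<ge> M\<close> \<open>n \<ge> M\<close>] by (simp add: abs_minus_commute)
    finally show "norm (cesaro_mean (\<lambda>n. f (u n)) m - cesaro_mean (\<lambda>n. f (u n)) n) < e"
      by simp
  qed
qed

lemma periodic_frac:
  fixes f :: "real \<Rightarrow> 'a"
  assumes "\<And>x. f (x + 1) = f x"
  shows "f (frac x) = f x"
proof -
  interpret periodic_fun_simple' f by standard (rule assms)
  have "f (frac x + of_int \<lfloor>x\<rfloor>) = f (frac x)" by (rule plus_of_int)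
  then show ?thesis by (simp add: frac_def)
qed

definition circle_fun :: "(real \<Rightarrow> real) \<Rightarrow> complex \<Rightarrow> real" where
  "circle_fun f z = f (Arg2pi z / (2 * pi))"

lemma circle_fun_cis:
  assumes per: "\<And>x. f (x + 1) = f x"
  shows "circle_fun f (cis (2 * pi * x)) = f x"
proof -
  have "cis (2 * pi * x) = cis (2 * pi * frac x)"
    using cis_mult[of "2 * pi * frac x" "2 * pi * of_int \<lfloor>x\<rfloor>"] cis_2pi_times_int[of "\<lfloor>x\<rfloor>"]
    by (simp add: frac_def algebra_simps)
  moreover have "Arg2pi (cis (2 * pi * frac x)) = 2 * pi * frac x"
    by (rule Arg2pi_unique[of 1]) (auto simp: cis_conv_exp frac_lt_1)
  ultimately show ?thesis
    unfolding circle_fun_def using periodic_frac[of f, OF per] by simp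
qed

text \<open>The map \<open>x \<mapsto> cis (2 pi x)\<close> from \<open>[0, 1]\<close> onto the circle is a quotient map, and
  \<open>circle_fun f\<close> composed with it is \<open>f\<close>.\<close>
lemma continuous_on_circle_fun:
  assumes cont: "continuous_on UNIV f" and per: "\<And>x. f (x + 1) = f x"
  shows "continuous_on (sphere 0 1) (circle_fun f)"
proof -
  define q where "q x = cis (2 * pi * x)" for x
  have image: "q ` {0..1} = sphere 0 1"
  proof
    show "sphere 0 1 \<subseteq> q ` {0..1}"
    proof
      fix z :: complex
      assume z: "z \<in> sphere 0 1"
      have "Arg2pi z / (2 * pi) \<in> {0..1}" using Arg2pi[of z] by (auto simp: field_simps)
      moreover have "q (Arg2pi z / (2 * pi)) = z"
        using Arg2pi_eq[of z] z by (simp add: q_def cis_conv_exp)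
      ultimately show "z \<in> q ` {0..1}" by force
    qed
  qed (auto simp: q_def)
  have "continuous_on {0..1} q" unfolding q_def by (intro continuous_intros)
  have quotient: "quotient_map (top_of_set {0..1}) (top_of_set (sphere 0 1)) q"
  proof (rule continuous_imp_quotient_map)
    show "continuous_map (top_of_set {0..1}) (top_of_set (sphere 0 1)) q"
      using \<open>continuous_on {0..1} q\<close> image by (auto simp: continuous_map_subtopology_eu)
    show "compact_space (top_of_set {0..1::real})" by (simp add: compact_space_subtopology)
    show "Hausdorff_space (top_of_set (sphere (0::complex) 1))"
      by (simp add: Hausdorff_space_subtopology)
    show "q ` topspace (top_of_set {0..1}) = topspace (top_of_set (sphere 0 1))" using image by simp
  qed
  have "continuous_on {0..1} (circle_fun f \<circ> q)"
  proof (rule continuous_on_eq)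
    show "continuous_on {0..1} f" using cont by (rule continuous_on_subset) simp
    show "f x = (circle_fun f \<circ> q) x" for x unfolding q_def by (simp add: circle_fun_cis per)
  qed
  then have "continuous_map (top_of_set (sphere 0 1)) euclidean (circle_fun f)"
    by (intro continuous_compose_quotient_map[OF quotient])
       (simp add: continuous_map_iff_continuous)
  then show ?thesis by (simp add: continuous_map_iff_continuous)
qed

text \<open>A continuous 1-periodic function is uniformly approximated by real polynomials in
  \<open>cos (2 pi x)\<close> and \<open>sin (2 pi x)\<close> (Stone--Weierstrass on the circle), which are trigonometric
  polynomials.\<close>
theorem cesaro_mean_convergent_if_exponential:
  fixes u :: "nat \<Rightarrow> real" and f :: "real \<Rightarrow> real"
  assumes exp: "\<And>k::int. convergent (cesaro_mean (\<lambda>n. cis (2 * pi * of_int k * u n)))"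
    and cont: "continuous_on UNIV f" and per: "\<And>x. f (x + 1) = f x"
  shows "convergent (cesaro_mean (\<lambda>n. f (u n)))"
proof (rule cesaro_mean_convergent_if_uniform_approx[where u = u and f = f])
  fix e :: real
  assume "e > 0"
  then obtain g where g: "real_polynomial_function g"
    and approx: "\<And>z. z \<in> sphere 0 1 \<Longrightarrow> \<bar>circle_fun f z - g z\<bar> < e"
    using Stone_Weierstrass_real_polynomial_function[OF compact_sphere
        continuous_on_circle_fun[OF cont per]]
    by metis
  define h where "h x = g (cis (2 * pi * x))" for x
  have "\<bar>f x - h x\<bar> \<le> e" for x
    using approx[of "cis (2 * pi * x)"] unfolding h_def circle_fun_cis[of f, OF per] by simp
  moreover have "convergent (cesaro_mean (\<lambda>n. h (u n)))"
  proof -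
    have "convergent (cesaro_mean (\<lambda>n. complex_of_real (h (u n))))"
      unfolding h_def
      by (rule trig_poly_cesaro_mean_convergent[OF exp trig_poly_real_polynomial[OF g]])
    then have "convergent (\<lambda>N. Re (cesaro_mean (\<lambda>n. complex_of_real (h (u n))) N))"
      by (auto simp: convergent_def intro: tendsto_Re)
    then show ?thesis by (simp add: cesaro_mean_def[abs_def] Re_divide_of_nat)
  qed
  ultimately show "\<exists>h. (\<forall>x. \<bar>f x - h x\<bar> \<le> e) \<and> convergent (cesaro_mean (\<lambda>n. h (u n)))"
    by blast
qed

section \<open>Limit measures on the circle\<close>

lemma borel_measurable_frac [measurable]: "frac \<in> borel_measurable (borel :: real measure)"
  unfolding frac_def by measurable

text \<open>For \<open>N = 0\<close> this is built from the junk value \<open>pmf_of_set {}\<close>; only \<open>N \<ge> 1\<close> matters.\<close>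
definition empirical_mod1 :: "(nat \<Rightarrow> real) \<Rightarrow> nat \<Rightarrow> real measure" where
  "empirical_mod1 u N = distr (measure_pmf (pmf_of_set {1..N})) borel (\<lambda>n. frac (u n))"

lemma real_distribution_empirical_mod1: "real_distribution (empirical_mod1 u N)"
  unfolding empirical_mod1_def real_distribution_def real_distribution_axioms_def
  by (simp add: prob_space.prob_space_distr prob_space_measure_pmf)

lemma integral_empirical_mod1:
  fixes f :: "real \<Rightarrow> real"
  assumes "N \<ge> 1" and [measurable]: "f \<in> borel_measurable borel" and per: "\<And>x. f (x + 1) = f x"
  shows "integral\<^sup>L (empirical_mod1 u N) f = cesaro_mean (\<lambda>n. f (u n)) N"
proof -
  have "integral\<^sup>L (empirical_mod1 u N) f
      = integral\<^sup>L (measure_pmf (pmf_of_set {1..N})) (\<lambda>n. f (frac (u n)))"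
    unfolding empirical_mod1_def by (rule integral_distr) (simp_all add: measurable_pmf_measure1)
  also have "\<dots> = cesaro_mean (\<lambda>n. f (u n)) N"
    using \<open>N \<ge> 1\<close> by (simp add: integral_pmf_of_set cesaro_mean_def periodic_frac[of f, OF per])
  finally show ?thesis .
qed

lemma tight_empirical_mod1: "tight (\<lambda>N. empirical_mod1 u (Suc N))"
  unfolding tight_def
proof (intro conjI allI impI)
  fix \<epsilon> :: real
  assume "\<epsilon> > 0"
  have "measure (empirical_mod1 u N) {-1<..1} = 1" for N
  proof -
    have "frac (u n) \<in> {-1<..1}" for n
      using frac_ge_0[of "u n"] frac_lt_1[of "u n"] unfolding greaterThanAtMost_iff by linarith
    then have "(\<lambda>n. frac (u n)) -` {-1<..1} = UNIV" by auto
    then show ?thesis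
      unfolding empirical_mod1_def by (subst measure_distr) simp_all
  qed
  with \<open>\<epsilon> > 0\<close> show "\<exists>a b. a < b \<and> (\<forall>N. 1 - \<epsilon> < measure (empirical_mod1 u (Suc N)) {a<..b})"
    by (intro exI[of _ "-1"] exI[of _ 1]) simp
qed (rule real_distribution_empirical_mod1)

lemma circle_prob_measure_distr_frac:
  assumes "real_distribution M"
  shows "circle_prob_measure (distr M borel frac)"
proof -
  interpret real_distribution M by fact
  have "frac -` (UNIV - {0..<1}) \<inter> space M = {}"
    by (auto simp: frac_lt_1)
  then have "emeasure (distr M borel frac) (UNIV - {0..<1}) = 0"
    by (subst emeasure_distr) simp_all
  then show ?thesis
    unfolding circle_prob_measure_def by (simp add: prob_space_distr)
qed

lemma bounded_if_continuous_periodic: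
  fixes f :: "real \<Rightarrow> real"
  assumes "continuous_on UNIV f" and per: "\<And>x. f (x + 1) = f x"
  obtains B where "\<And>x. \<bar>f x\<bar> \<le> B"
proof -
  have "bounded (f ` {0..1})"
    by (intro compact_imp_bounded compact_continuous_image continuous_on_subset[OF assms(1)]) auto
  then obtain B where B: "\<And>y. y \<in> f ` {0..1} \<Longrightarrow> \<bar>y\<bar> \<le> B"
    by (auto simp: bounded_real)
  have "\<bar>f x\<bar> \<le> B" for x
  proof -
    have "frac x \<in> {0..1}" using frac_ge_0[of x] frac_lt_1[of x] by simp
    then have "\<bar>f (frac x)\<bar> \<le> B" using B by blast
    then show ?thesis using periodic_frac[of f, OF per] by simp
  qed
  then show ?thesis by (rule that)
qed

text \<open>The empirical distributions live on \<open>[0, 1)\<close>, hence are tight; Helly's selection theorem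
  gives a weakly convergent subsequence, and pushing its limit forward by \<open>frac\<close> yields the
  measure on the circle.\<close>
theorem circle_measure_if_cesaro_mean_convergent:
  fixes u :: "nat \<Rightarrow> real"
  assumes conv: "\<And>f :: real \<Rightarrow> real. continuous_on UNIV f \<Longrightarrow> (\<And>x. f (x + 1) = f x)
      \<Longrightarrow> convergent (cesaro_mean (\<lambda>n. f (u n)))"
  shows "\<exists>\<mu>. circle_prob_measure \<mu> \<and> distr_mod1_converges u \<mu>"
proof -
  define \<nu> where "\<nu> N = empirical_mod1 u (Suc N)" for N
  obtain r M where r: "strict_mono r" and M: "real_distribution M" and weak: "weak_conv_m (\<nu> \<circ> r) M"
    using tight_imp_convergent_subsubsequence[OF tight_empirical_mod1[of u, folded \<nu>_def]
        strict_mono_id]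
    by auto
  interpret M: real_distribution M by (rule M)
  define \<mu> where "\<mu> = distr M borel frac"
  have "distr_mod1_converges u \<mu>"
    unfolding distr_mod1_converges_def
  proof (intro allI impI)
    fix f :: "real \<Rightarrow> real"
    assume cont: "continuous_on UNIV f" and "\<forall>x. f (x + 1) = f x"
    then have per: "\<And>x. f (x + 1) = f x" by blast
    have [measurable]: "f \<in> borel_measurable borel"
      by (rule borel_measurable_continuous_onI[OF cont])
    obtain L where L: "cesaro_mean (\<lambda>n. f (u n)) \<longlonglongrightarrow> L"
      using conv[of f] cont per by (auto simp: convergent_def)
    obtain B where B: "\<And>x. \<bar>f x\<bar> \<le> B" using bounded_if_continuous_periodic[OF cont per] by blast
    have "(\<lambda>k. integral\<^sup>L ((\<nu> \<circ> r) k) f) \<longlonglongrightarrow> integral\<^sup>L M f"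
      using cont B real_distribution_empirical_mod1
      by (intro weak_conv_imp_integral_bdd_continuous_conv[OF _ M weak, of f B])
         (auto simp: \<nu>_def continuous_on_eq_continuous_at)
    moreover have "(\<lambda>k. integral\<^sup>L ((\<nu> \<circ> r) k) f) = cesaro_mean (\<lambda>n. f (u n)) \<circ> (Suc \<circ> r)"
      by (simp add: \<nu>_def integral_empirical_mod1 per comp_def)
    moreover have "(cesaro_mean (\<lambda>n. f (u n)) \<circ> (Suc \<circ> r)) \<longlonglongrightarrow> L"
      using r by (intro LIMSEQ_subseq_LIMSEQ[OF L]) (simp add: strict_mono_def)
    ultimately have "L = integral\<^sup>L M f" using LIMSEQ_unique by metis
    also have "\<dots> = integral\<^sup>L \<mu> f"
      unfolding \<mu>_def by (simp add: integral_distr periodic_frac[of f, OF per])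
    finally show "(\<lambda>N. (\<Sum>n = 1..N. f (u n)) / real N) \<longlonglongrightarrow> integral\<^sup>L \<mu> f"
      using L by (simp add: cesaro_mean_def[abs_def])
  qed
  then show ?thesis
    using circle_prob_measure_distr_frac[OF M] unfolding \<mu>_def by blast
qed

theorem mainTheorem7:
  fixes \<beta> :: real
  shows "\<exists>\<mu>. circle_prob_measure \<mu> \<and> distr_mod1_converges (\<lambda>n. \<beta> * real (hofH n)) \<mu>"
proof (rule circle_measure_if_cesaro_mean_convergent)
  fix f :: "real \<Rightarrow> real"
  assume "continuous_on UNIV f" "\<And>x. f (x + 1) = f x"
  moreover have "convergent (cesaro_mean (\<lambda>n. cis (2 * pi * of_int k * (\<beta> * real (hofH n)))))"
    for k :: int
    using cesaro_mean_cis_hofH_convergent[of "2 * pi * of_int k * \<beta>"] by (simp add: mult.assoc)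
  ultimately show "convergent (cesaro_mean (\<lambda>n. f (\<beta> * real (hofH n))))"
    by (intro cesaro_mean_convergent_if_exponential)
qed

end
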